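(* For every integer $k\ge 2$, no graph $G\in\mathcal{H}_k$ contains $K_{2,k+2}$ as a minor.
   Context: All graphs are finite; parallel edges are allowed, loops are not. A length-function on a graph $G$ is a map $\ell:E(G)\to\mathbb{R}^+$ (strictly positive reals); $\ell(H)=\sum_{e\in E(H)}\ell(e)$ for subgraphs $H$, which carry the restricted length-function. $\mathrm{sd}_G(A)$ is the minimum of $\ell(S)$ over connected subgraphs $S\subseteq G$ with $A\subseteq V(S)$ ($\infty$ if none). $H\subseteq G$ is $k$-geodesic in $G$ if $\mathrm{sd}_H(A)=\mathrm{sd}_G(A)$ for all $A\subseteq V(H)$ with $|A|\le k$, and fully geodesic if it is $k$-geodesic for all $k$. For $k\ge2$, $\mathcal{H}_k$ is the class of all graphs $H$ such that for every graph $G\supseteq H$ and every length-function on $G$ for which $H$ is $k$-geodesic in $G$, $H$ is fully geodesic in $G$. *)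

theory Defs
  imports Complex_Main "HOL-Library.Extended_Real"
begin

text \<open>Finite multigraphs (parallel edges allowed, no loops). Vertices and edges are
  labelled by natural numbers, so that every finite graph and every finite supergraph of
  a given graph can be represented (up to isomorphism).\<close>

record mgraph =
  verts :: "nat set"
  edges :: "nat set"
  ends  :: "nat \<Rightarrow> nat set"

definition is_graph :: "mgraph \<Rightarrow> bool" where
  "is_graph G \<longleftrightarrow> finite (verts G) \<and> finite (edges G) \<and>
     (\<forall>e\<in>edges G. ends G e \<subseteq> verts G \<and> card (ends G e) = 2)"

definition subgraph :: "mgraph \<Rightarrow> mgraph \<Rightarrow> bool" where
  "subgraph H G \<longleftrightarrow> is_graph H \<and> is_graph G \<and> verts H \<subseteq> verts G \<and>
     edges H \<subseteq> edges G \<and> (\<forall>e\<in>edges H. ends H e = ends G e)"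

definition step_in :: "mgraph \<Rightarrow> nat set \<Rightarrow> nat \<Rightarrow> nat \<Rightarrow> bool" where
  "step_in G B x y \<longleftrightarrow> x \<in> B \<and> y \<in> B \<and> (\<exists>e\<in>edges G. ends G e = {x, y})"

definition connected_in :: "mgraph \<Rightarrow> nat set \<Rightarrow> bool" where
  "connected_in G B \<longleftrightarrow> (\<forall>x\<in>B. \<forall>y\<in>B. (step_in G B)\<^sup>*\<^sup>* x y)"

definition connected_graph :: "mgraph \<Rightarrow> bool" where
  "connected_graph S \<longleftrightarrow> connected_in S (verts S)"

definition length_fun :: "mgraph \<Rightarrow> (nat \<Rightarrow> real) \<Rightarrow> bool" where
  "length_fun G l \<longleftrightarrow> (\<forall>e\<in>edges G. l e > 0)"

text \<open>Steiner distance sd_G(A): minimum length of a connected subgraph of G containing A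
  (infinity if none; the minimum is attained since there are finitely many values).\<close>
definition sd :: "mgraph \<Rightarrow> (nat \<Rightarrow> real) \<Rightarrow> nat set \<Rightarrow> ereal" where
  "sd G l A = Inf {ereal (\<Sum>e\<in>edges S. l e) | S. subgraph S G \<and> connected_graph S \<and> A \<subseteq> verts S}"

definition k_geodesic :: "nat \<Rightarrow> mgraph \<Rightarrow> mgraph \<Rightarrow> (nat \<Rightarrow> real) \<Rightarrow> bool" where
  "k_geodesic k H G l \<longleftrightarrow> (\<forall>A. A \<subseteq> verts H \<and> card A \<le> k \<longrightarrow> sd H l A = sd G l A)"

definition fully_geodesic :: "mgraph \<Rightarrow> mgraph \<Rightarrow> (nat \<Rightarrow> real) \<Rightarrow> bool" where
  "fully_geodesic H G l \<longleftrightarrow> (\<forall>k. k_geodesic k H G l)"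

definition class_H :: "nat \<Rightarrow> mgraph set" where
  "class_H k = {H. is_graph H \<and>
     (\<forall>G l. subgraph H G \<and> length_fun G l \<and> k_geodesic k H G l \<longrightarrow> fully_geodesic H G l)}"

definition has_minor :: "mgraph \<Rightarrow> 'w set \<Rightarrow> ('w \<Rightarrow> 'w \<Rightarrow> bool) \<Rightarrow> bool" where
  "has_minor G W adj \<longleftrightarrow> (\<exists>B :: 'w \<Rightarrow> nat set.
     (\<forall>w\<in>W. B w \<noteq> {} \<and> B w \<subseteq> verts G \<and> connected_in G (B w)) \<and>
     (\<forall>w\<in>W. \<forall>w'\<in>W. w \<noteq> w' \<longrightarrow> B w \<inter> B w' = {}) \<and>
     (\<forall>w\<in>W. \<forall>w'\<in>W. adj w w' \<longrightarrow>
        (\<exists>e\<in>edges G. \<exists>x\<in>B w. \<exists>y\<in>B w'. ends G e = {x, y})))"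

definition K2_verts :: "nat \<Rightarrow> (bool + nat) set" where
  "K2_verts n = range Inl \<union> Inr ` {..<n}"

definition K2_adj :: "bool + nat \<Rightarrow> bool + nat \<Rightarrow> bool" where
  "K2_adj u v \<longleftrightarrow> isl u \<noteq> isl v"

definition has_K2n_minor :: "mgraph \<Rightarrow> nat \<Rightarrow> bool" where
  "has_K2n_minor G n \<longleftrightarrow> has_minor G (K2_verts n) K2_adj"

end

theory Submission
  imports Defs
begin

text \<open>
  A K_{2,k+2} minor contains a K_{2,k} minor, with hubs B (Inl False), B (Inl True) and spokes
  B (Inr i), i < k. Pick terminals alpha in the first hub and zeta i in each spoke, and add an
  apex joined to these k + 1 terminals by edges of length k - 1 + delta. In H, edges from the
  first hub to a spoke get length k, edges from the second hub to a spoke k - 1, the edges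
  inside branch sets together at most delta, and all other edges k^2. Apex edges to at most k
  terminals can be replaced by a tree through one hub that is no longer, so H is k-geodesic;
  but every connected subgraph of H containing all k + 1 terminals has length at least k^2,
  while the star at the apex has length k^2 - 1/2.
\<close>

section \<open>Connectivity and Steiner distance\<close>

lemma step_in_sym: "step_in G X x y \<Longrightarrow> step_in G X y x"
  unfolding step_in_def by (auto simp: insert_commute)

lemma step_in_mono:
  assumes "step_in G X x y" "X \<subseteq> Y"
    and "\<And>e. e \<in> edges G \<Longrightarrow> ends G e \<subseteq> X \<Longrightarrow> e \<in> edges G' \<and> ends G' e = ends G e"
  shows "step_in G' Y x y"
  using assms unfolding step_in_def by (metis insert_subset subset_iff empty_subsetI)

lemma rtranclp_step_in_mono:
  assumes "(step_in G X)\<^sup>*\<^sup>* x y" "X \<subseteq> Y"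
    and "\<And>e. e \<in> edges G \<Longrightarrow> ends G e \<subseteq> X \<Longrightarrow> e \<in> edges G' \<and> ends G' e = ends G e"
  shows "(step_in G' Y)\<^sup>*\<^sup>* x y"
  using assms(1) by (rule rtranclp_mono[THEN predicate2D, rotated]) (use step_in_mono assms(2,3) in blast)

lemma rtranclp_mono_on_reachable:
  assumes "r\<^sup>*\<^sup>* x y" and "\<And>a b. r\<^sup>*\<^sup>* x a \<Longrightarrow> r a b \<Longrightarrow> s a b"
  shows "s\<^sup>*\<^sup>* x y"
  using assms(1)
proof (induction rule: rtranclp_induct)
  case (step y z)
  then show ?case using assms(2) by (meson rtranclp.rtrancl_into_rtrancl)
qed simp

lemma connected_in_if_reachable_from:
  assumes "\<And>v. v \<in> X \<Longrightarrow> (step_in G X)\<^sup>*\<^sup>* r v"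
  shows "connected_in G X"
proof -
  have "(step_in G X)\<^sup>*\<^sup>* v r" if "v \<in> X" for v
    using assms[OF that] by (induction rule: rtranclp_induct)
      (auto intro: converse_rtranclp_into_rtranclp step_in_sym)
  then show ?thesis unfolding connected_in_def by (meson assms rtranclp_trans)
qed

lemma connected_in_Un_star:
  assumes "connected_in G C" and "\<And>i. i \<in> I \<Longrightarrow> connected_in G (Y i)"
    and "\<And>i. i \<in> I \<Longrightarrow> \<exists>e\<in>edges G. \<exists>x\<in>C. \<exists>y\<in>Y i. ends G e = {x, y}"
  shows "connected_in G (C \<union> (\<Union>i\<in>I. Y i))"
proof (cases "C = {}")
  case True
  then have "I = {}" using assms(3) by fastforce
  then show ?thesis using True unfolding connected_in_def by simp
next
  case False
  let ?X = "C \<union> (\<Union>i\<in>I. Y i)"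
  obtain r where r: "r \<in> C" using False by blast
  have within: "(step_in G ?X)\<^sup>*\<^sup>* a b" if "connected_in G Z" "Z \<subseteq> ?X" "a \<in> Z" "b \<in> Z" for Z a b
    using that unfolding connected_in_def by (blast intro: rtranclp_step_in_mono)
  show ?thesis
  proof (rule connected_in_if_reachable_from)
    fix v assume "v \<in> ?X"
    then consider "v \<in> C" | i where "i \<in> I" "v \<in> Y i" by blast
    then show "(step_in G ?X)\<^sup>*\<^sup>* r v"
    proof cases
      case 1
      then show ?thesis using within[OF assms(1)] r by blast
    next
      case 2
      then obtain e x y where e: "e \<in> edges G" "x \<in> C" "y \<in> Y i" "ends G e = {x, y}"
        using assms(3) by blast
      then have "step_in G ?X x y" using 2 unfolding step_in_def by blast
      then show ?thesis using within[OF assms(1)] within[OF assms(2)] 2 e r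
        by (meson UN_upper Un_upper1 Un_upper2 order_trans rtranclp.rtrancl_into_rtrancl rtranclp_trans)
    qed
  qed
qed

lemma connected_graph_crossing_edge:
  assumes "connected_graph S" "x \<in> verts S" "x \<in> X" "y \<in> verts S" "y \<notin> X"
  shows "\<exists>e\<in>edges S. \<exists>p q. ends S e = {p, q} \<and> p \<in> X \<and> q \<notin> X"
proof -
  have "z \<in> X \<or> (\<exists>e\<in>edges S. \<exists>p q. ends S e = {p, q} \<and> p \<in> X \<and> q \<notin> X)"
    if "(step_in S (verts S))\<^sup>*\<^sup>* x z" for z
    using that by (induction rule: rtranclp_induct) (use assms(3) in \<open>auto simp: step_in_def\<close>)
  moreover have "(step_in S (verts S))\<^sup>*\<^sup>* x y"
    using assms unfolding connected_graph_def connected_in_def by blast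
  ultimately show ?thesis using assms(5) by blast
qed

lemma connected_graph_reach_avoiding:
  assumes "connected_graph S" "u \<in> verts S" "y \<in> verts S" "y \<noteq> u"
  shows "\<exists>q. q \<noteq> u \<and> (\<exists>e\<in>edges S. ends S e = {u, q}) \<and> (step_in S (verts S - {u}))\<^sup>*\<^sup>* q y"
proof -
  have "z = u \<or> (\<exists>q. q \<noteq> u \<and> (\<exists>e\<in>edges S. ends S e = {u, q}) \<and> (step_in S (verts S - {u}))\<^sup>*\<^sup>* q z)"
    if "(step_in S (verts S))\<^sup>*\<^sup>* u z" for z
    using that
  proof (induction rule: rtranclp_induct)
    case (step z z')
    then obtain e where e: "z \<in> verts S" "z' \<in> verts S" "e \<in> edges S" "ends S e = {z, z'}"
      unfolding step_in_def by blast
    show ?case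
    proof (cases "z = u \<or> z' = u")
      case True
      then show ?thesis using e by blast
    next
      case False
      then have "step_in S (verts S - {u}) z z'" using e unfolding step_in_def by blast
      then show ?thesis using step.IH False by (meson rtranclp.rtrancl_into_rtrancl)
    qed
  qed simp
  moreover have "(step_in S (verts S))\<^sup>*\<^sup>* u y"
    using assms unfolding connected_graph_def connected_in_def by blast
  ultimately show ?thesis using assms(4) by blast
qed

definition subgraph_on :: "mgraph \<Rightarrow> nat set \<Rightarrow> nat set \<Rightarrow> mgraph" where
  "subgraph_on G V E = \<lparr>verts = V, edges = E, ends = ends G\<rparr>"

lemma subgraph_on_simps [simp]:
  "verts (subgraph_on G V E) = V" "edges (subgraph_on G V E) = E" "ends (subgraph_on G V E) = ends G"
  unfolding subgraph_on_def by simp_all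

lemma subgraph_subgraph_on:
  assumes "is_graph G" "V \<subseteq> verts G" "E \<subseteq> edges G" "\<And>e. e \<in> E \<Longrightarrow> ends G e \<subseteq> V"
  shows "subgraph (subgraph_on G V E) G"
  using assms unfolding subgraph_def is_graph_def by (auto intro: finite_subset)

lemma subgraph_trans: "subgraph S H \<Longrightarrow> subgraph H G \<Longrightarrow> subgraph S G"
  unfolding subgraph_def by (metis (no_types) subset_trans subsetD)

lemma sd_le_length:
  assumes "subgraph S G" "connected_graph S" "A \<subseteq> verts S"
  shows "sd G l A \<le> ereal (\<Sum>e\<in>edges S. l e)"
  unfolding sd_def by (rule Inf_lower) (use assms in blast)

lemma length_le_sd:
  assumes "\<And>S. subgraph S G \<Longrightarrow> connected_graph S \<Longrightarrow> A \<subseteq> verts S \<Longrightarrow> b \<le> (\<Sum>e\<in>edges S. l e)"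
  shows "ereal b \<le> sd G l A"
  unfolding sd_def by (rule Inf_greatest) (use assms in auto)

lemma sd_le_sd:
  assumes "\<And>S. subgraph S G \<Longrightarrow> connected_graph S \<Longrightarrow> A \<subseteq> verts S \<Longrightarrow>
     \<exists>S'. subgraph S' H \<and> connected_graph S' \<and> A \<subseteq> verts S' \<and> (\<Sum>e\<in>edges S'. l e) \<le> (\<Sum>e\<in>edges S. l e)"
  shows "sd H l A \<le> sd G l A"
  unfolding sd_def
proof (rule Inf_greatest)
  fix x assume "x \<in> {ereal (\<Sum>e\<in>edges S. l e) |S. subgraph S G \<and> connected_graph S \<and> A \<subseteq> verts S}"
  then obtain S where S: "subgraph S G" "connected_graph S" "A \<subseteq> verts S" "x = ereal (\<Sum>e\<in>edges S. l e)"
    by blast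
  with assms obtain S' where S': "subgraph S' H" "connected_graph S'" "A \<subseteq> verts S'"
    "(\<Sum>e\<in>edges S'. l e) \<le> (\<Sum>e\<in>edges S. l e)" by blast
  have "sd H l A \<le> ereal (\<Sum>e\<in>edges S'. l e)" by (rule sd_le_length[OF S'(1-3)])
  also have "\<dots> \<le> x" using S(4) S'(4) by simp
  finally have "sd H l A \<le> x" .
  then show "Inf {ereal (\<Sum>e\<in>edges S. l e) |S. subgraph S H \<and> connected_graph S \<and> A \<subseteq> verts S} \<le> x"
    unfolding sd_def .
qed

lemma sd_supergraph_le: "subgraph H G \<Longrightarrow> sd G l A \<le> sd H l A"
  by (rule sd_le_sd) (use subgraph_trans in blast)

lemma has_minor_subset:
  assumes "W' \<subseteq> W" "has_minor G W adj"
  shows "has_minor G W' adj"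
proof -
  obtain B :: "'a \<Rightarrow> nat set" where
    "\<forall>w\<in>W. B w \<noteq> {} \<and> B w \<subseteq> verts G \<and> connected_in G (B w)"
    "\<forall>w\<in>W. \<forall>w'\<in>W. w \<noteq> w' \<longrightarrow> B w \<inter> B w' = {}"
    "\<forall>w\<in>W. \<forall>w'\<in>W. adj w w' \<longrightarrow> (\<exists>e\<in>edges G. \<exists>x\<in>B w. \<exists>y\<in>B w'. ends G e = {x, y})"
    using assms(2) unfolding has_minor_def by (elim exE conjE) assumption
  with assms(1) show ?thesis
    unfolding has_minor_def by (intro exI[of _ B] conjI ballI impI) (meson subsetD)+
qed

lemma K2_verts_mono: "m \<le> n \<Longrightarrow> K2_verts m \<subseteq> K2_verts n"
  unfolding K2_verts_def by auto

section \<open>The apex extension of a K_{2,k} minor\<close>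

locale K2n_model =
  fixes H :: mgraph and k :: nat and B :: "bool + nat \<Rightarrow> nat set"
  assumes graph: "is_graph H" and two_le_k: "2 \<le> k"
    and branch_set: "w \<in> K2_verts k \<Longrightarrow> B w \<noteq> {} \<and> B w \<subseteq> verts H \<and> connected_in H (B w)"
    and branch_sets_disjoint: "w \<in> K2_verts k \<Longrightarrow> w' \<in> K2_verts k \<Longrightarrow> w \<noteq> w' \<Longrightarrow> B w \<inter> B w' = {}"
    and branch_sets_adjacent: "w \<in> K2_verts k \<Longrightarrow> w' \<in> K2_verts k \<Longrightarrow> K2_adj w w' \<Longrightarrow>
      \<exists>e\<in>edges H. \<exists>x\<in>B w. \<exists>y\<in>B w'. ends H e = {x, y}"
begin

lemma K2_verts_iff [simp]: "Inl h \<in> K2_verts k" "Inr i \<in> K2_verts k \<longleftrightarrow> i < k"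
  unfolding K2_verts_def by auto

lemma finite_graph: "finite (verts H)" "finite (edges H)"
  using graph unfolding is_graph_def by auto

lemma branch_unique: "w \<in> K2_verts k \<Longrightarrow> w' \<in> K2_verts k \<Longrightarrow> x \<in> B w \<Longrightarrow> x \<in> B w' \<Longrightarrow> w = w'"
  using branch_sets_disjoint by blast

lemma mem_branch_Union_iff:
  "W \<subseteq> K2_verts k \<Longrightarrow> w \<in> K2_verts k \<Longrightarrow> x \<in> B w \<Longrightarrow> x \<in> \<Union>(B ` W) \<longleftrightarrow> w \<in> W"
  using branch_unique by blast

definition joins :: "bool \<Rightarrow> nat \<Rightarrow> nat \<Rightarrow> bool" where
  "joins h i e \<longleftrightarrow> (\<exists>x\<in>B (Inl h). \<exists>y\<in>B (Inr i). ends H e = {x, y})"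

definition internal :: "nat \<Rightarrow> bool" where
  "internal e \<longleftrightarrow> (\<exists>w\<in>K2_verts k. ends H e \<subseteq> B w)"

lemma joins_unique:
  assumes "joins h i e" "joins h' j e" "i < k" "j < k"
  shows "h = h' \<and> i = j"
proof -
  obtain x y x' y' where xy: "x \<in> B (Inl h)" "y \<in> B (Inr i)" "x' \<in> B (Inl h')" "y' \<in> B (Inr j)"
    "{x, y} = {x', y'}"
    using assms(1,2) unfolding joins_def by metis
  then consider "x = x'" "y = y'" | "x = y'" by (metis doubleton_eq_iff)
  then show ?thesis
  proof cases
    case 1
    then show ?thesis using branch_unique[of "Inl h" "Inl h'" x] branch_unique[of "Inr i" "Inr j" y] xy assms
      by auto
  next
    case 2
    then show ?thesis using branch_unique[of "Inl h" "Inr j" x] xy assms by auto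
  qed
qed

lemma joins_not_internal: "joins h i e \<Longrightarrow> i < k \<Longrightarrow> \<not> internal e"
  unfolding joins_def internal_def
  by (metis (no_types, lifting) K2_verts_iff branch_unique insert_subset sum.distinct(1))

lemma joins_exists: "i < k \<Longrightarrow> \<exists>e\<in>edges H. joins h i e"
  using branch_sets_adjacent[of "Inl h" "Inr i"] unfolding joins_def K2_adj_def by simp

definition apex :: nat where "apex = Suc (Max (insert 0 (verts H)))"

definition offset :: nat where "offset = Suc (Max (insert 0 (edges H)))"

definition alpha :: nat where "alpha = (SOME x. x \<in> B (Inl False))"

definition zeta :: "nat \<Rightarrow> nat" where "zeta i = (SOME x. x \<in> B (Inr i))"

definition terminals :: "nat set" where "terminals = insert alpha (zeta ` {..<k})"

definition apex_graph :: mgraph where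
  "apex_graph = \<lparr>verts = insert apex (verts H), edges = edges H \<union> (+) offset ` terminals,
     ends = (\<lambda>e. if offset \<le> e then {apex, e - offset} else ends H e)\<rparr>"

definition delta :: real where "delta = 1 / (2 * (real k + 1))"

definition apex_len :: real where "apex_len = real k - 1 + delta"

definition eps :: real where "eps = delta / (real (card (edges H)) + 1)"

definition hub_len :: "bool \<Rightarrow> real" where "hub_len h = (if h then real k - 1 else real k)"

definition len :: "nat \<Rightarrow> real" where
  "len e = (if offset \<le> e then apex_len
     else if \<exists>i<k. joins False i e then hub_len False
     else if \<exists>i<k. joins True i e then hub_len True
     else if internal e then eps else real k ^ 2)"

lemma apex_notin: "apex \<notin> verts H"
proof
  assume "apex \<in> verts H"
  then have "apex \<le> Max (insert 0 (verts H))" using finite_graph(1) by simp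
  then show False unfolding apex_def by simp
qed

lemma less_offset: "e \<in> edges H \<Longrightarrow> e < offset"
  unfolding offset_def using finite_graph(2) by (simp add: le_imp_less_Suc)

lemma alpha_in: "alpha \<in> B (Inl False)"
  unfolding alpha_def using branch_set[of "Inl False"] by (simp add: some_in_eq)

lemma zeta_in: "i < k \<Longrightarrow> zeta i \<in> B (Inr i)"
  unfolding zeta_def using branch_set[of "Inr i"] by (simp add: some_in_eq)

lemma zeta_inj: "inj_on zeta {..<k}"
  by (rule inj_onI) (use zeta_in branch_unique[of "Inr _" "Inr _"] in fastforce)

lemma alpha_notin_zeta: "alpha \<notin> zeta ` {..<k}"
  using alpha_in zeta_in branch_unique[of "Inl False" "Inr _"] by fastforce

lemma card_terminals: "card terminals = k + 1"
  unfolding terminals_def using alpha_notin_zeta zeta_inj by (simp add: card_image)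

lemma terminals_subset: "terminals \<subseteq> verts H"
proof -
  have "alpha \<in> verts H" using alpha_in branch_set[of "Inl False"] by auto
  moreover have "zeta i \<in> verts H" if "i < k" for i using zeta_in[OF that] branch_set[of "Inr i"] that by auto
  ultimately show ?thesis unfolding terminals_def by auto
qed

lemma apex_graph_simps:
  "verts apex_graph = insert apex (verts H)" "edges apex_graph = edges H \<union> (+) offset ` terminals"
  "offset \<le> e \<Longrightarrow> ends apex_graph e = {apex, e - offset}"
  "e \<in> edges H \<Longrightarrow> ends apex_graph e = ends H e"
  unfolding apex_graph_def using less_offset[of e] by auto

lemma apex_edge_cases:
  assumes "e \<in> edges apex_graph" "e \<notin> edges H"
  shows "offset \<le> e \<and> e - offset \<in> terminals \<and> ends apex_graph e = {apex, e - offset}"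
  using assms unfolding apex_graph_simps(2) by (auto simp: apex_graph_simps(3))

lemma is_graph_apex_graph: "is_graph apex_graph"
  unfolding is_graph_def
proof (intro conjI)
  show "finite (verts apex_graph)" "finite (edges apex_graph)"
    using finite_graph finite_subset[OF terminals_subset finite_graph(1)] unfolding apex_graph_simps by auto
  show "\<forall>e\<in>edges apex_graph. ends apex_graph e \<subseteq> verts apex_graph \<and> card (ends apex_graph e) = 2"
  proof (intro ballI)
    fix e assume e: "e \<in> edges apex_graph"
    show "ends apex_graph e \<subseteq> verts apex_graph \<and> card (ends apex_graph e) = 2"
    proof (cases "e \<in> edges H")
      case True
      then show ?thesis
        using graph unfolding is_graph_def apex_graph_simps(1) apex_graph_simps(4)[OF True] by auto
    next
      case False
      then have t: "e - offset \<in> verts H" and ends: "ends apex_graph e = {apex, e - offset}"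
        using apex_edge_cases[OF e] terminals_subset by blast+
      then have "e - offset \<noteq> apex" using apex_notin by auto
      then show ?thesis using t ends by (simp add: apex_graph_simps(1))
    qed
  qed
qed

lemma subgraph_apex_graph: "subgraph H apex_graph"
  unfolding subgraph_def using graph is_graph_apex_graph by (auto simp: apex_graph_simps)

lemma delta_pos: "delta > 0"
  unfolding delta_def by simp

lemma card_edges_eps: "real (card (edges H)) * eps \<le> delta"
proof -
  have "real (card (edges H)) * eps = delta * (real (card (edges H)) / (real (card (edges H)) + 1))"
    unfolding eps_def by simp
  also have "\<dots> \<le> delta * 1" using delta_pos by (intro mult_left_mono) auto
  finally show ?thesis by simp
qed

lemma len_pos: "len e > 0"
  using two_le_k delta_pos unfolding len_def apex_len_def hub_len_def eps_def by auto

lemma len_apex: "offset \<le> e \<Longrightarrow> len e = apex_len"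
  unfolding len_def by simp

lemma len_joins: "e \<in> edges H \<Longrightarrow> i < k \<Longrightarrow> joins h i e \<Longrightarrow> len e = hub_len h"
  using less_offset[of e] joins_unique[of h i e] unfolding len_def by (cases h) auto

lemma len_internal: "e \<in> edges H \<Longrightarrow> internal e \<Longrightarrow> len e = eps"
  using less_offset[of e] joins_not_internal unfolding len_def by auto

lemma len_other:
  "e \<in> edges H \<Longrightarrow> \<not> internal e \<Longrightarrow> (\<And>h i. i < k \<Longrightarrow> \<not> joins h i e) \<Longrightarrow> len e = real k ^ 2"
  using less_offset[of e] unfolding len_def by auto

lemma length_fun_len: "length_fun apex_graph len"
  unfolding length_fun_def using len_pos by simp

lemma sum_len_mono: "E \<subseteq> F \<Longrightarrow> finite F \<Longrightarrow> sum len E \<le> sum len F"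
  using len_pos by (intro sum_mono2) (auto intro: less_imp_le)

lemma sum_len_internal:
  assumes "E \<subseteq> edges H" "\<And>e. e \<in> E \<Longrightarrow> internal e"
  shows "sum len E \<le> delta"
proof -
  have "sum len E = real (card E) * eps"
    using assms len_internal by (simp add: subset_iff)
  also have "\<dots> \<le> real (card (edges H)) * eps"
    using card_mono[OF finite_graph(2) assms(1)] delta_pos unfolding eps_def
    by (intro mult_right_mono) auto
  finally show ?thesis using card_edges_eps by simp
qed

lemma sum_len_Un_le: "finite E \<Longrightarrow> finite F \<Longrightarrow> sum len (E \<union> F) \<le> sum len E + sum len F"
  using len_pos by (simp add: sum_Un sum_nonneg less_imp_le)

lemma connected_in_branch:
  assumes "w \<in> K2_verts k" "B w \<subseteq> V" "{e\<in>edges H. internal e \<and> ends H e \<subseteq> V} \<subseteq> E"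
  shows "connected_in (subgraph_on H V E) (B w)"
  unfolding connected_in_def
proof (intro ballI)
  have "e \<in> E" if "e \<in> edges H" "ends H e \<subseteq> B w" for e
    using that assms unfolding internal_def by blast
  moreover fix x y assume "x \<in> B w" "y \<in> B w"
  then have "(step_in H (B w))\<^sup>*\<^sup>* x y" using branch_set[OF assms(1)] unfolding connected_in_def by blast
  then show "(step_in (subgraph_on H V E) (B w))\<^sup>*\<^sup>* x y"
    by (rule rtranclp_step_in_mono) (use calculation in auto)
qed

lemma hub_tree:
  assumes "I \<subseteq> {..<k}"
  obtains T where "subgraph T H" "connected_graph T" "B (Inl h) \<union> (\<Union>i\<in>I. B (Inr i)) \<subseteq> verts T"
    "sum len (edges T) \<le> delta + real (card I) * hub_len h"
proof -
  have "\<forall>i\<in>I. \<exists>e. e \<in> edges H \<and> joins h i e" using joins_exists assms by blast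
  then obtain c where c: "\<And>i. i \<in> I \<Longrightarrow> c i \<in> edges H \<and> joins h i (c i)" by metis
  define V where "V = B (Inl h) \<union> (\<Union>i\<in>I. B (Inr i))"
  define Ei where "Ei = {e\<in>edges H. internal e \<and> ends H e \<subseteq> V}"
  define T where "T = subgraph_on H V (Ei \<union> c ` I)"
  have ends_c: "\<exists>x\<in>B (Inl h). \<exists>y\<in>B (Inr i). ends T (c i) = {x, y}" if "i \<in> I" for i
    using c[OF that] unfolding T_def joins_def by simp
  then have ends_c_V: "ends H (c i) \<subseteq> V" if "i \<in> I" for i
    using that unfolding T_def V_def by fastforce
  have "B (Inr i) \<subseteq> verts H" if "i \<in> I" for i using branch_set[of "Inr i"] that assms by auto
  then have "V \<subseteq> verts H" unfolding V_def using branch_set[of "Inl h"] by auto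
  then have "subgraph T H" unfolding T_def
    using c ends_c_V by (intro subgraph_subgraph_on graph) (auto simp: Ei_def)
  moreover have "connected_in T (B (Inl h) \<union> (\<Union>i\<in>I. B (Inr i)))"
  proof (rule connected_in_Un_star)
    show "connected_in T (B (Inl h))" "\<And>i. i \<in> I \<Longrightarrow> connected_in T (B (Inr i))"
      unfolding T_def using assms by (auto intro!: connected_in_branch simp: V_def Ei_def)
  next
    fix i assume "i \<in> I"
    then show "\<exists>e\<in>edges T. \<exists>x\<in>B (Inl h). \<exists>y\<in>B (Inr i). ends T e = {x, y}"
      using ends_c[OF \<open>i \<in> I\<close>] \<open>i \<in> I\<close> unfolding T_def by (metis UnI2 image_eqI subgraph_on_simps(2))
  qed
  then have "connected_graph T" unfolding connected_graph_def T_def V_def by simp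
  moreover have "sum len (edges T) \<le> delta + real (card I) * hub_len h"
  proof -
    have fin: "finite I" "finite Ei" using assms finite_graph(2) finite_subset by (auto simp: Ei_def)
    have "sum len (edges T) \<le> sum len Ei + sum len (c ` I)"
      unfolding T_def using fin by (simp add: sum_len_Un_le)
    also have "sum len Ei \<le> delta" by (rule sum_len_internal) (auto simp: Ei_def)
    also have "sum len (c ` I) \<le> (\<Sum>i\<in>I. len (c i))"
      using sum_image_le[OF fin(1), of len c] len_pos by (simp add: less_imp_le)
    also have "\<dots> = (\<Sum>i\<in>I. hub_len h)"
      using c assms len_joins by (intro sum.cong) auto
    also have "\<dots> = real (card I) * hub_len h" by simp
    finally show ?thesis by simp
  qed
  ultimately show thesis using that unfolding T_def V_def by simp
qed

lemma terminal_tree: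
  assumes "Q \<subseteq> terminals" "Q \<noteq> {}" "card Q \<le> k"
  obtains T where "subgraph T H" "connected_graph T" "Q \<subseteq> verts T"
    "sum len (edges T) \<le> real (card Q) * apex_len"
proof -
  define I where "I = {i. i < k \<and> zeta i \<in> Q}"
  define h where "h = (alpha \<notin> Q)"
  have I: "I \<subseteq> {..<k}" by (auto simp: I_def)
  then have fin: "finite I" by (rule finite_subset) simp
  have Q_eq: "Q = (if h then {} else {alpha}) \<union> zeta ` I"
    using assms(1) unfolding h_def I_def terminals_def by auto
  have "card (zeta ` I) = card I" using zeta_inj I by (simp add: card_image inj_on_subset)
  moreover have "alpha \<notin> zeta ` I" using alpha_notin_zeta I by blast
  ultimately have card_Q: "card Q = (if h then 0 else 1) + card I"
    using Q_eq fin by (auto simp: card_insert_if)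
  obtain T where T: "subgraph T H" "connected_graph T" "B (Inl h) \<union> (\<Union>i\<in>I. B (Inr i)) \<subseteq> verts T"
    "sum len (edges T) \<le> delta + real (card I) * hub_len h"
    using hub_tree[OF I] .
  have "Q \<subseteq> B (Inl h) \<union> (\<Union>i\<in>I. B (Inr i))"
    using Q_eq alpha_in zeta_in I by (cases h) auto
  moreover have "delta + real (card I) * hub_len h \<le> real (card Q) * apex_len"
  proof (cases h)
    case True
    then have "1 \<le> card I" using card_Q assms(2) Q_eq fin by (auto simp: Suc_le_eq)
    then show ?thesis using True card_Q delta_pos unfolding hub_len_def apex_len_def
      by (simp add: algebra_simps)
  next
    case False
    then have "1 + real (card I) \<le> real k" using card_Q assms(3) by simp
    moreover have "0 \<le> delta * real (card I)" using delta_pos by simp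
    ultimately show ?thesis using False card_Q unfolding hub_len_def apex_len_def
      by (simp add: algebra_simps)
  qed
  ultimately show thesis using that T by (meson order_trans)
qed

section \<open>H is k-geodesic in the apex extension\<close>

lemma apex_graph_edge_in_H:
  assumes "subgraph S apex_graph" "e \<in> edges S" "apex \<notin> ends S e"
  shows "e \<in> edges H \<and> ends S e = ends H e"
proof -
  have "e \<in> edges apex_graph" "ends S e = ends apex_graph e"
    using assms(1,2) unfolding subgraph_def by auto
  then show ?thesis using apex_edge_cases assms(3) apex_graph_simps(4) by fastforce
qed

lemma subgraph_H_if_apex_notin:
  assumes S: "subgraph S apex_graph" and "apex \<notin> verts S"
  shows "subgraph S H"
proof -
  have "is_graph S" "verts S \<subseteq> verts H"
    using S assms(2) unfolding subgraph_def apex_graph_simps by auto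
  moreover have "e \<in> edges H \<and> ends S e = ends H e" if "e \<in> edges S" for e
    using apex_graph_edge_in_H[OF S that] assms(2) that calculation(1) unfolding is_graph_def by blast
  ultimately show ?thesis using graph unfolding subgraph_def by blast
qed

lemma apex_edge_eq:
  assumes "subgraph S apex_graph" "e \<in> edges S" "ends S e = {apex, q}" "q \<noteq> apex"
  shows "e = offset + q \<and> q \<in> terminals"
proof -
  have e: "e \<in> edges apex_graph" "ends S e = ends apex_graph e"
    using assms(1,2) unfolding subgraph_def by auto
  have "e \<notin> edges H"
    using assms(3) apex_graph_simps(4) e(2) graph apex_notin unfolding is_graph_def by fastforce
  then show ?thesis using apex_edge_cases[OF e(1)] e(2) assms(3,4) by (metis doubleton_eq_iff le_add_diff_inverse)
qed

definition apex_free_reach :: "mgraph \<Rightarrow> nat set \<Rightarrow> nat set" where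
  "apex_free_reach S Q = {y. \<exists>q\<in>Q. (step_in S (verts S - {apex}))\<^sup>*\<^sup>* q y}"

definition reroute :: "mgraph \<Rightarrow> mgraph \<Rightarrow> nat set \<Rightarrow> mgraph" where
  "reroute T S Q = subgraph_on H (verts T \<union> apex_free_reach S Q)
     (edges T \<union> {e\<in>edges S. ends S e \<subseteq> apex_free_reach S Q})"

lemma apex_free_reach_subset: "apex_free_reach S Q \<subseteq> Q \<union> (verts S - {apex})"
proof
  fix y assume "y \<in> apex_free_reach S Q"
  then obtain q where "(step_in S (verts S - {apex}))\<^sup>*\<^sup>* q y" "q \<in> Q"
    unfolding apex_free_reach_def by blast
  then show "y \<in> Q \<union> (verts S - {apex})"
    by (induction rule: rtranclp_induct) (auto simp: step_in_def)
qed

lemma apex_notin_apex_free_reach: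
  "subgraph T H \<Longrightarrow> Q \<subseteq> verts T \<Longrightarrow> apex \<notin> apex_free_reach S Q"
  using apex_free_reach_subset apex_notin unfolding subgraph_def by blast

lemma reroute_subgraph:
  assumes T: "subgraph T H" "Q \<subseteq> verts T" and S: "subgraph S apex_graph"
  shows "subgraph (reroute T S Q) H"
  unfolding reroute_def
proof (rule subgraph_subgraph_on[OF graph])
  let ?R = "apex_free_reach S Q"
  have "verts S - {apex} \<subseteq> verts H" using S unfolding subgraph_def apex_graph_simps by blast
  then show "verts T \<union> ?R \<subseteq> verts H" using T apex_free_reach_subset unfolding subgraph_def by blast
  have "e \<in> edges H \<and> ends H e \<subseteq> ?R" if "e \<in> edges S" "ends S e \<subseteq> ?R" for e
    using that apex_graph_edge_in_H[OF S] apex_notin_apex_free_reach[OF T] by fastforce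
  moreover have "e \<in> edges H \<and> ends H e \<subseteq> verts T" if "e \<in> edges T" for e
    using that T(1) unfolding subgraph_def is_graph_def by (metis subsetD)
  ultimately show "edges T \<union> {e\<in>edges S. ends S e \<subseteq> ?R} \<subseteq> edges H"
    "\<And>e. e \<in> edges T \<union> {e\<in>edges S. ends S e \<subseteq> ?R} \<Longrightarrow> ends H e \<subseteq> verts T \<union> ?R" by blast+
qed

lemma reroute_connected:
  assumes T: "subgraph T H" "connected_graph T" "Q \<subseteq> verts T" "Q \<noteq> {}"
    and S: "subgraph S apex_graph"
  shows "connected_graph (reroute T S Q)"
proof -
  let ?S' = "reroute T S Q" and ?R = "apex_free_reach S Q"
  obtain r where r: "r \<in> Q" using T(4) by blast
  have from_T: "(step_in ?S' (verts ?S'))\<^sup>*\<^sup>* x y" if "x \<in> verts T" "y \<in> verts T" for x y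
  proof -
    have "(step_in T (verts T))\<^sup>*\<^sup>* x y" using T(2) that unfolding connected_graph_def connected_in_def by blast
    then show ?thesis
      by (rule rtranclp_step_in_mono) (use T(1) in \<open>auto simp: reroute_def subgraph_def\<close>)
  qed
  have from_Q: "(step_in ?S' (verts ?S'))\<^sup>*\<^sup>* q y"
    if "q \<in> Q" "(step_in S (verts S - {apex}))\<^sup>*\<^sup>* q y" for q y
    using that(2)
  proof (rule rtranclp_mono_on_reachable)
    fix a b
    assume "(step_in S (verts S - {apex}))\<^sup>*\<^sup>* q a" and ab: "step_in S (verts S - {apex}) a b"
    then have "a \<in> ?R" "b \<in> ?R"
      using that(1) unfolding apex_free_reach_def by (blast intro: rtranclp.rtrancl_into_rtrancl)+
    moreover obtain e where "e \<in> edges S" "ends S e = {a, b}" using ab unfolding step_in_def by blast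
    moreover have "apex \<notin> ?R" by (rule apex_notin_apex_free_reach[OF T(1,3)])
    ultimately show "step_in ?S' (verts ?S') a b"
      using apex_graph_edge_in_H[OF S] unfolding step_in_def reroute_def by fastforce
  qed
  show ?thesis
    unfolding connected_graph_def
  proof (rule connected_in_if_reachable_from)
    fix v assume "v \<in> verts ?S'"
    then consider "v \<in> verts T"
      | q where "q \<in> Q" "(step_in S (verts S - {apex}))\<^sup>*\<^sup>* q v"
      unfolding reroute_def apex_free_reach_def by auto
    then show "(step_in ?S' (verts ?S'))\<^sup>*\<^sup>* r v"
    proof cases
      case 2
      then show ?thesis using from_T[of r q] from_Q[OF 2] r T(3) by (meson rtranclp_trans subsetD)
    qed (use from_T r T(3) in blast)
  qed
qed

lemma reroute_cost:
  assumes T: "subgraph T H" "Q \<subseteq> verts T" "sum len (edges T) \<le> real (card Q) * apex_len"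
    and S: "subgraph S apex_graph" "(+) offset ` Q \<subseteq> edges S" and "finite Q"
  shows "sum len (edges (reroute T S Q)) \<le> sum len (edges S)"
proof -
  define ER where "ER = {e\<in>edges S. ends S e \<subseteq> apex_free_reach S Q}"
  have fin: "finite (edges T)" "finite (edges S)"
    using T(1) S(1) unfolding subgraph_def is_graph_def by auto
  have "apex \<notin> apex_free_reach S Q" by (rule apex_notin_apex_free_reach[OF T(1,2)])
  then have "e < offset" if "e \<in> ER" for e
    using that apex_graph_edge_in_H[OF S(1)] less_offset unfolding ER_def by blast
  then have disjoint: "(+) offset ` Q \<inter> ER = {}" by fastforce
  have "sum len (edges (reroute T S Q)) \<le> sum len (edges T) + sum len ER"
    using fin unfolding reroute_def ER_def by (simp add: sum_len_Un_le)
  also have "sum len (edges T) \<le> sum len ((+) offset ` Q)"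
    using T(3) len_apex by (simp add: sum.reindex)
  also have "sum len ((+) offset ` Q) + sum len ER = sum len ((+) offset ` Q \<union> ER)"
    using fin(2) S(2) disjoint by (intro sum.union_disjoint[symmetric]) (auto simp: ER_def intro: finite_subset)
  also have "\<dots> \<le> sum len (edges S)"
    using fin(2) S(2) by (intro sum_len_mono) (auto simp: ER_def)
  finally show ?thesis by simp
qed

text \<open>
  Every vertex of A is reached from the apex through a neighbour; these at most k neighbours
  are terminals, and joining them by a tree in H is no longer than their apex edges.
\<close>

lemma cheaper_subgraph_through_apex:
  assumes S: "subgraph S apex_graph" "connected_graph S" "A \<subseteq> verts S" "apex \<in> verts S"
    and A: "A \<subseteq> verts H" "A \<noteq> {}" "card A \<le> k"
  obtains S' where "subgraph S' H" "connected_graph S'" "A \<subseteq> verts S'"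
    "sum len (edges S') \<le> sum len (edges S)"
proof -
  have "\<forall>a\<in>A. \<exists>q. q \<noteq> apex \<and> (\<exists>e\<in>edges S. ends S e = {apex, q}) \<and> (step_in S (verts S - {apex}))\<^sup>*\<^sup>* q a"
    using connected_graph_reach_avoiding[OF S(2,4)] S(3) A(1) apex_notin by blast
  then obtain f where f: "\<And>a. a \<in> A \<Longrightarrow> f a \<noteq> apex \<and> (\<exists>e\<in>edges S. ends S e = {apex, f a}) \<and>
      (step_in S (verts S - {apex}))\<^sup>*\<^sup>* (f a) a"
    by metis
  define Q where "Q = f ` A"
  have fin: "finite A" "finite Q" using A(1) finite_graph(1) finite_subset unfolding Q_def by blast+
  have apex_edges: "offset + q \<in> edges S \<and> q \<in> terminals" if "q \<in> Q" for q
    using that f apex_edge_eq[OF S(1)] unfolding Q_def by blast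
  have "card Q \<le> k" using card_image_le[OF fin(1), of f] A(3) unfolding Q_def by linarith
  then obtain T where T: "subgraph T H" "connected_graph T" "Q \<subseteq> verts T"
    "sum len (edges T) \<le> real (card Q) * apex_len"
    using terminal_tree[of Q] apex_edges A(2) unfolding Q_def by blast
  have "A \<subseteq> apex_free_reach S Q" using f unfolding Q_def apex_free_reach_def by blast
  then have "A \<subseteq> verts (reroute T S Q)" unfolding reroute_def by auto
  moreover have "Q \<noteq> {}" using A(2) unfolding Q_def by blast
  ultimately show thesis
    using that reroute_subgraph[OF T(1,3) S(1)] reroute_connected[OF T(1-3) _ S(1)]
      reroute_cost[OF T(1,3,4) S(1) _ fin(2)] apex_edges by blast
qed

lemma cheaper_subgraph_in_H:
  assumes S: "subgraph S apex_graph" "connected_graph S" "A \<subseteq> verts S"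
    and A: "A \<subseteq> verts H" "card A \<le> k"
  shows "\<exists>S'. subgraph S' H \<and> connected_graph S' \<and> A \<subseteq> verts S' \<and> sum len (edges S') \<le> sum len (edges S)"
proof -
  consider "A = {}" | "apex \<notin> verts S" | "A \<noteq> {}" "apex \<in> verts S" by blast
  then show ?thesis
  proof cases
    case 1
    have "subgraph (subgraph_on H {} {}) H" by (rule subgraph_subgraph_on[OF graph]) auto
    moreover have "connected_graph (subgraph_on H {} {})"
      unfolding connected_graph_def connected_in_def by simp
    moreover have "0 \<le> sum len (edges S)" using len_pos by (simp add: sum_nonneg less_imp_le)
    ultimately show ?thesis using 1 by (intro exI[of _ "subgraph_on H {} {}"]) simp
  next
    case 2
    then show ?thesis using subgraph_H_if_apex_notin[OF S(1)] S(2,3) by blast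
  next
    case 3
    then show ?thesis using cheaper_subgraph_through_apex[OF S _ A(1) _ A(2)] by metis
  qed
qed

lemma k_geodesic_apex_graph: "k_geodesic k H apex_graph len"
  unfolding k_geodesic_def
proof (intro allI impI)
  fix A assume "A \<subseteq> verts H \<and> card A \<le> k"
  then have "sd H len A \<le> sd apex_graph len A"
    by (intro sd_le_sd) (use cheaper_subgraph_in_H in blast)
  then show "sd H len A = sd apex_graph len A"
    using sd_supergraph_le[OF subgraph_apex_graph] by (rule antisym)
qed

section \<open>The terminals are expensive in H\<close>

lemma crossing_joins_edge:
  assumes S: "subgraph S H" "connected_graph S"
    and typed: "\<And>e. e \<in> edges S \<Longrightarrow> internal e \<or> (\<exists>h. \<exists>i<k. joins h i e)"
    and W: "W \<subseteq> K2_verts k"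
    and xy: "x \<in> verts S" "x \<in> \<Union>(B ` W)" "y \<in> verts S" "y \<notin> \<Union>(B ` W)"
  shows "\<exists>e\<in>edges S. \<exists>h. \<exists>i<k. joins h i e \<and> (Inl h \<in> W \<longleftrightarrow> Inr i \<notin> W)"
proof -
  obtain e p q where e: "e \<in> edges S" "ends H e = {p, q}" "p \<in> \<Union>(B ` W)" "q \<notin> \<Union>(B ` W)"
    using connected_graph_crossing_edge[OF S(2) xy] S(1) unfolding subgraph_def by metis
  have "\<not> internal e"
  proof
    assume "internal e"
    then obtain w where "w \<in> K2_verts k" "p \<in> B w" "q \<in> B w" using e(2) unfolding internal_def by auto
    then show False using e(3,4) mem_branch_Union_iff[OF W] by blast
  qed
  then obtain h i where hi: "i < k" "joins h i e" using typed[OF e(1)] by blast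
  then obtain a b where "a \<in> B (Inl h)" "b \<in> B (Inr i)" "{a, b} = {p, q}"
    using e(2) unfolding joins_def by metis
  then have "Inl h \<in> W \<longleftrightarrow> Inr i \<notin> W"
    using e(3,4) mem_branch_Union_iff[OF W, of "Inl h"] mem_branch_Union_iff[OF W, of "Inr i"] hi(1)
    by (auto simp: doubleton_eq_iff)
  then show ?thesis using e(1) hi by blast
qed

definition hub_edges :: "mgraph \<Rightarrow> nat \<Rightarrow> nat set" where
  "hub_edges S i = {e\<in>edges S. \<exists>h. joins h i e}"

lemma sum_hub_edges_le:
  assumes "subgraph S H"
  shows "(\<Sum>i<k. sum len (hub_edges S i)) \<le> sum len (edges S)"
proof -
  have fin: "finite (edges S)" using assms unfolding subgraph_def is_graph_def by auto
  have disjoint: "hub_edges S i \<inter> hub_edges S j = {}" if "i < k" "j < k" "i \<noteq> j" for i j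
    using joins_unique that unfolding hub_edges_def by blast
  have "(\<Sum>i<k. sum len (hub_edges S i)) = sum len (\<Union>i<k. hub_edges S i)"
    using fin disjoint by (intro sum.UNION_disjoint[symmetric]) (auto simp: hub_edges_def)
  also have "\<dots> \<le> sum len (edges S)" using fin by (intro sum_len_mono) (auto simp: hub_edges_def)
  finally show ?thesis .
qed

lemma len_hub_edge:
  assumes "subgraph S H" "i < k" "e \<in> hub_edges S i"
  shows "real k - 1 \<le> len e"
proof -
  obtain h where "e \<in> edges H" "joins h i e"
    using assms unfolding hub_edges_def subgraph_def by blast
  then show ?thesis using len_joins assms(2) unfolding hub_len_def by (cases h) auto
qed

lemma hub_edges_nonempty:
  assumes S: "subgraph S H" "connected_graph S" "terminals \<subseteq> verts S"
    and typed: "\<And>e. e \<in> edges S \<Longrightarrow> internal e \<or> (\<exists>h. \<exists>i<k. joins h i e)"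
    and "i < k"
  shows "hub_edges S i \<noteq> {}"
proof -
  have v: "zeta i \<in> verts S" "alpha \<in> verts S" using S(3) \<open>i < k\<close> unfolding terminals_def by auto
  have b: "zeta i \<in> \<Union>(B ` {Inr i})" "alpha \<notin> \<Union>(B ` {Inr i})"
    using zeta_in alpha_in branch_unique[of "Inl False" "Inr i"] \<open>i < k\<close> by auto
  have "{Inr i} \<subseteq> K2_verts k" using \<open>i < k\<close> by simp
  from crossing_joins_edge[OF S(1,2) typed this v(1) b(1) v(2) b(2)]
  obtain e h j where "e \<in> edges S" "joins h j e" "Inr j = Inr i" by auto
  then show ?thesis unfolding hub_edges_def by auto
qed

lemma len_le_sum_hub_edges: "subgraph S H \<Longrightarrow> e \<in> hub_edges S i \<Longrightarrow> len e \<le> sum len (hub_edges S i)"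
  using len_pos unfolding subgraph_def is_graph_def hub_edges_def
  by (intro member_le_sum) (auto intro: less_imp_le)

lemma sum_hub_edges_ge_each:
  assumes S: "subgraph S H" "connected_graph S" "terminals \<subseteq> verts S"
    and typed: "\<And>e. e \<in> edges S \<Longrightarrow> internal e \<or> (\<exists>h. \<exists>i<k. joins h i e)"
    and "i < k"
  shows "real k - 1 \<le> sum len (hub_edges S i)"
  using hub_edges_nonempty[OF S typed \<open>i < k\<close>] len_hub_edge[OF S(1) \<open>i < k\<close>]
    len_le_sum_hub_edges[OF S(1)]
  by (meson ex_in_conv order_trans)

lemma hub_with_both_edges:
  assumes S: "subgraph S H" "connected_graph S" "terminals \<subseteq> verts S"
    and typed: "\<And>e. e \<in> edges S \<Longrightarrow> internal e \<or> (\<exists>h. \<exists>i<k. joins h i e)"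
    and i0: "i0 < k" "\<forall>e\<in>edges S. \<not> joins False i0 e"
  obtains i e e' where "i < k" "e \<in> edges S" "joins True i e" "e' \<in> edges S" "joins False i e'"
proof -
  txt \<open>The second hub and the spokes without an edge to the first hub contain zeta i0 but not
    alpha, so some edge of S leaves them from the second hub towards one of the other spokes.\<close>
  define J where "J = {i. i < k \<and> (\<forall>e\<in>edges S. \<not> joins False i e)}"
  define W where "W = insert (Inl True) (Inr ` J)"
  have W: "W \<subseteq> K2_verts k" unfolding W_def J_def by auto
  have "\<exists>e\<in>edges S. \<exists>h. \<exists>i<k. joins h i e \<and> (Inl h \<in> W \<longleftrightarrow> Inr i \<notin> W)"
  proof (rule crossing_joins_edge[OF S(1,2) typed W])
    show "zeta i0 \<in> verts S" "alpha \<in> verts S" using S(3) i0(1) unfolding terminals_def by auto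
    show "zeta i0 \<in> \<Union>(B ` W)" using zeta_in i0 unfolding W_def J_def by blast
    show "alpha \<notin> \<Union>(B ` W)" using mem_branch_Union_iff[OF W _ alpha_in] unfolding W_def by auto
  qed
  then obtain e h i where e: "e \<in> edges S" "i < k" "joins h i e" "Inl h \<in> W \<longleftrightarrow> Inr i \<notin> W"
    by blast
  have "h = True" using e unfolding W_def J_def by auto
  moreover have "i \<notin> J" using e(4) calculation unfolding W_def by auto
  ultimately show thesis using that e(1-3) unfolding J_def by blast
qed

lemma sum_hub_edges_ge:
  assumes S: "subgraph S H" "connected_graph S" "terminals \<subseteq> verts S"
    and typed: "\<And>e. e \<in> edges S \<Longrightarrow> internal e \<or> (\<exists>h. \<exists>i<k. joins h i e)"
  shows "real k ^ 2 \<le> (\<Sum>i<k. sum len (hub_edges S i))"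
proof -
  have len_False: "len e = real k" if "e \<in> edges S" "joins False i e" "i < k" for e i
    using that S(1) len_joins unfolding subgraph_def hub_len_def by auto
  show ?thesis
  proof (cases "\<forall>i<k. \<exists>e\<in>edges S. joins False i e")
    case True
    then have "real k \<le> sum len (hub_edges S i)" if "i < k" for i
      using that len_False len_le_sum_hub_edges[OF S(1)] unfolding hub_edges_def by fastforce
    then have "(\<Sum>i<k. real k) \<le> (\<Sum>i<k. sum len (hub_edges S i))" by (intro sum_mono) simp
    then show ?thesis by (simp add: power2_eq_square)
  next
    case False
    then obtain i e e' where i: "i < k" "e \<in> edges S" "joins True i e" "e' \<in> edges S" "joins False i e'"
      using hub_with_both_edges[OF S typed] by blast
    then have "e \<noteq> e'" using joins_unique by blast
    then have "len e + len e' = sum len {e, e'}" by simp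
    also have "\<dots> \<le> sum len (hub_edges S i)"
      using i S(1) by (intro sum_len_mono) (auto simp: hub_edges_def subgraph_def is_graph_def)
    finally have "len e + len e' \<le> sum len (hub_edges S i)" .
    moreover have "len e = real k - 1" "len e' = real k"
      using i S(1) len_joins len_False unfolding subgraph_def hub_len_def by auto
    moreover have "(\<Sum>j\<in>{..<k} - {i}. real k - 1) \<le> (\<Sum>j\<in>{..<k} - {i}. sum len (hub_edges S j))"
      using sum_hub_edges_ge_each[OF S typed] by (intro sum_mono) simp
    moreover have "(\<Sum>j<k. sum len (hub_edges S j)) =
        sum len (hub_edges S i) + (\<Sum>j\<in>{..<k} - {i}. sum len (hub_edges S j))"
      using i(1) by (intro sum.remove) auto
    ultimately have "2 * real k - 1 + real (k - 1) * (real k - 1) \<le> (\<Sum>j<k. sum len (hub_edges S j))"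
      using i(1) by (simp add: card_Diff_singleton)
    moreover have "2 * real k - 1 + real (k - 1) * (real k - 1) = real k ^ 2"
      using i(1) by (simp add: power2_eq_square algebra_simps)
    ultimately show ?thesis by simp
  qed
qed

lemma terminals_cost_ge:
  assumes S: "subgraph S H" "connected_graph S" "terminals \<subseteq> verts S"
  shows "real k ^ 2 \<le> sum len (edges S)"
proof (cases "\<forall>e\<in>edges S. internal e \<or> (\<exists>h. \<exists>i<k. joins h i e)")
  case True
  then show ?thesis using sum_hub_edges_ge[OF S] sum_hub_edges_le[OF S(1)] by auto
next
  case False
  then obtain e where e: "e \<in> edges S" "\<not> internal e" "\<And>h i. i < k \<Longrightarrow> \<not> joins h i e" by blast
  have fin: "finite (edges S)" using S(1) unfolding subgraph_def is_graph_def by auto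
  have "real k ^ 2 = len e" using e S(1) len_other unfolding subgraph_def by auto
  also have "\<dots> \<le> sum len (edges S)" using e(1) fin len_pos by (intro member_le_sum) (auto intro: less_imp_le)
  finally show ?thesis .
qed

definition apex_star :: mgraph where
  "apex_star = subgraph_on apex_graph (insert apex terminals) ((+) offset ` terminals)"

lemma sd_terminals_apex_graph: "sd apex_graph len terminals \<le> ereal (real (k + 1) * apex_len)"
proof -
  have sub: "subgraph apex_star apex_graph"
    unfolding apex_star_def using terminals_subset
    by (intro subgraph_subgraph_on is_graph_apex_graph) (auto simp: apex_graph_simps)
  moreover have conn: "connected_graph apex_star"
    unfolding connected_graph_def
  proof (rule connected_in_if_reachable_from)
    fix v assume "v \<in> verts apex_star"
    then have "v = apex \<or> step_in apex_star (verts apex_star) apex v"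
      unfolding apex_star_def step_in_def by (auto simp: apex_graph_simps)
    then show "(step_in apex_star (verts apex_star))\<^sup>*\<^sup>* apex v" by auto
  qed
  moreover have "sum len (edges apex_star) = real (k + 1) * apex_len"
    unfolding apex_star_def using card_terminals len_apex by (simp add: sum.reindex)
  ultimately show ?thesis
    using sd_le_length[OF sub conn, of terminals len] unfolding apex_star_def by (simp add: subset_insertI)
qed

lemma not_fully_geodesic: "\<not> fully_geodesic H apex_graph len"
proof
  assume "fully_geodesic H apex_graph len"
  then have "sd H len terminals = sd apex_graph len terminals"
    using terminals_subset card_terminals unfolding fully_geodesic_def k_geodesic_def by (metis order_refl)
  moreover have "ereal (real k ^ 2) \<le> sd H len terminals"
    by (rule length_le_sd) (use terminals_cost_ge in blast)
  moreover have "real (k + 1) * apex_len = real k ^ 2 - 1 / 2"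
    unfolding apex_len_def delta_def by (simp add: field_simps power2_eq_square)
  ultimately have "ereal (real k ^ 2) \<le> ereal (real k ^ 2 - 1 / 2)"
    using sd_terminals_apex_graph by (metis order_trans)
  then show False by simp
qed

lemma not_in_class_H: "H \<notin> class_H k"
  unfolding class_H_def
  using subgraph_apex_graph length_fun_len k_geodesic_apex_graph not_fully_geodesic by blast

end

theorem class_H_no_K2n_minor:
  assumes "2 \<le> k" "G \<in> class_H k"
  shows "\<not> has_K2n_minor G k"
proof
  assume "has_K2n_minor G k"
  then obtain B where "K2n_model G k B"
    using assms unfolding has_K2n_minor_def has_minor_def K2n_model_def class_H_def
    by (elim exE conjE CollectE) (metis ballI)
  then interpret K2n_model G k B .
  show False using not_in_class_H assms(2) by blast
qed

theorem corollary6p8: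
  fixes k :: nat and G :: mgraph
  assumes "k \<ge> 2" and "G \<in> class_H k"
  shows "\<not> has_K2n_minor G (k + 2)"
  using class_H_no_K2n_minor[OF assms] has_minor_subset[OF K2_verts_mono[of k "k + 2"]]
  unfolding has_K2n_minor_def by auto

end
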